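(* Consider the controlled SEIR system described in the context. The set $$\mathbb{X}_f:=\Big\{(S,E,I)\in\Pi:\ S\le \tfrac{\gamma_{\mathrm{nom}}}{\beta_{\mathrm{nom}}},\ I\le I_{\max},\ E\le \tfrac{\gamma_{\mathrm{nom}}}{\eta}I_{\max}\Big\}\cup\mathcal{E}$$ is contained in $\mathcal{M}$. Moreover, for every $x_0\in\mathbb{X}_f$ and every $u\in\mathcal{U}$, the compartments $E$ and $I$ of $x(\cdot;x_0,u)$ decay exponentially, i.e., there exist constants $c\ge0$ and $\lambda>0$ with $E(t)+I(t)\le c\,e^{-\lambda t}$ for all $t\ge 0$.
   Context: Fix parameters $\eta>0$, $0<\beta_{\min}\le\beta_{\mathrm{nom}}$, $0<\gamma_{\mathrm{nom}}\le\gamma_{\max}<\infty$ and $I_{\max}\in(0,1)$. Let $U:=[\beta_{\min},\beta_{\mathrm{nom}}]\times[\gamma_{\mathrm{nom}},\gamma_{\max}]$ and let $\mathcal{U}$ be the set of measurable, locally integrable functions $u=(\beta,\gamma):[0,\infty)\to U$. Let $\Pi:=\{(S,E,I)\in[0,1]^3: S+E+I\le 1\}$. For $x_0\in\Pi$ and $u\in\mathcal{U}$, $x(\cdot;x_0,u)=(S,E,I)$ denotes the unique solution of $\dot S=-\beta(t)SI$, $\dot E=\beta(t)SI-\eta E$, $\dot I=\eta E-\gamma(t)I$ with $x(0)=x_0$; it stays in $\Pi$. Let $G_\Pi:=\{(S,E,I)\in\Pi: I\le I_{\max}\}$ and $\mathcal{M}:=\{x_0\in G_\Pi: x(t;x_0,u)\in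 G_\Pi\ \forall t\ge0,\ \forall u\in\mathcal{U}\}$ (maximal robust positively invariant set). The set of disease-free equilibria is $\mathcal{E}:=\{(S,0,0): S\in[0,1]\}$. *)

theory Defs
  imports "HOL-Analysis.Analysis"
begin

type_synonym state = "real \<times> real \<times> real"   (* (S, E, I) *)
type_synonym control = "real \<times> real"          (* (beta, gamma) *)

definition seir_rhs :: "real \<Rightarrow> control \<Rightarrow> state \<Rightarrow> state" where
  "seir_rhs eta u x = (case x of (S, E, I) \<Rightarrow> case u of (b, g) \<Rightarrow>
      (- b * S * I, b * S * I - eta * E, eta * E - g * I))"

definition Uset :: "real \<Rightarrow> real \<Rightarrow> real \<Rightarrow> real \<Rightarrow> control set" where
  "Uset bmin bnom gnom gmax = {bmin..bnom} \<times> {gnom..gmax}"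

definition admissible :: "real \<Rightarrow> real \<Rightarrow> real \<Rightarrow> real \<Rightarrow> (real \<Rightarrow> control) \<Rightarrow> bool" where
  "admissible bmin bnom gnom gmax u \<longleftrightarrow>
     u \<in> borel_measurable (restrict_space lborel {0..}) \<and>
     (\<forall>T\<ge>0. u integrable_on {0..T}) \<and>
     (\<forall>t\<ge>0. u t \<in> Uset bmin bnom gnom gmax)"

definition is_sol :: "real \<Rightarrow> (real \<Rightarrow> control) \<Rightarrow> state \<Rightarrow> (real \<Rightarrow> state) \<Rightarrow> bool" where
  "is_sol eta u x0 x \<longleftrightarrow> x 0 = x0 \<and>
     (\<forall>t\<ge>0. ((\<lambda>s. seir_rhs eta (u s) (x s)) has_integral (x t - x0)) {0..t})"

definition Pi_set :: "state set" where
  "Pi_set = {(S, E, I). 0 \<le> S \<and> S \<le> 1 \<and> 0 \<le> E \<and> E \<le> 1 \<and> 0 \<le> I \<and> I \<le> 1 \<and> S + E + I \<le> 1}"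

definition G_Pi :: "real \<Rightarrow> state set" where
  "G_Pi Imax = {x \<in> Pi_set. snd (snd x) \<le> Imax}"

definition MRPI :: "real \<Rightarrow> real \<Rightarrow> real \<Rightarrow> real \<Rightarrow> real \<Rightarrow> real \<Rightarrow> state set" where
  "MRPI eta bmin bnom gnom gmax Imax =
     {x0 \<in> G_Pi Imax. \<forall>u. admissible bmin bnom gnom gmax u \<longrightarrow>
        (\<forall>x. is_sol eta u x0 x \<longrightarrow> (\<forall>t\<ge>0. x t \<in> G_Pi Imax))}"

definition DFE :: "state set" where
  "DFE = {(S, 0, 0) | S. 0 \<le> S \<and> S \<le> 1}"

definition Xf :: "real \<Rightarrow> real \<Rightarrow> real \<Rightarrow> real \<Rightarrow> state set" where
  "Xf eta bnom gnom Imax =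
     {(S, E, I) \<in> Pi_set. S \<le> gnom / bnom \<and> I \<le> Imax \<and> E \<le> gnom / eta * Imax} \<union> DFE"

end

theory Submission
  imports Defs
begin

(* Whenever one of the constraints 0 <= S, 0 <= E, 0 <= I, S + E + I <= 1 is violated, its rate of
   change is bounded by a multiple of the total violation; as the total violation is zero initially,
   a Gronwall argument keeps it zero, so Pi is invariant. S is then nonincreasing, so S <= gnom/bnom
   persists and bounds the infection rate beta S I by gamma I; the same argument then keeps
   E <= gnom Imax / eta and I <= Imax. For the decay: if S is constant on [0,1], then I and E vanish
   there, and a disease-free state stays disease-free (Gronwall for E + I). Otherwise S(1) < gnom/bnom,
   and from time 1 on V = E + c I with a suitable c < 1 satisfies V' <= -lam V. Solutions are only
   given in integral form, so all comparison arguments are phrased with integrals. *)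

lemma continuous_on_if_has_integral_diff:
  fixes h F :: "real \<Rightarrow> real"
  assumes "\<And>t. t \<in> {a..b} \<Longrightarrow> (h has_integral (F t - F a)) {a..t}"
  shows "continuous_on {a..b} F"
proof (cases "a \<le> b")
  case True
  have "h integrable_on {a..b}"
    using assms[of b] True has_integral_integrable by fastforce
  then have "continuous_on {a..b} (\<lambda>t. F a + integral {a..t} h)"
    by (intro continuous_intros indefinite_integral_continuous_1)
  moreover have "F a + integral {a..t} h = F t" if "t \<in> {a..b}" for t
    using integral_unique[OF assms[OF that]] by simp
  ultimately show ?thesis
    by (rule continuous_on_eq)
qed simp

lemma has_integral_diff_subinterval:
  fixes h F :: "real \<Rightarrow> real"
  assumes "\<And>s. s \<in> {a..b} \<Longrightarrow> (h has_integral (F s - F a)) {a..s}"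
    and "a \<le> c" "c \<le> t" "t \<le> b"
  shows "(h has_integral (F t - F c)) {c..t}"
proof -
  have h_int: "h integrable_on {a..t}"
    using assms by (meson atLeastAtMost_iff has_integral_integrable order_trans)
  have "integral {a..c} h + integral {c..t} h = integral {a..t} h"
    using Henstock_Kurzweil_Integration.integral_combine[OF assms(2,3) h_int] .
  moreover have "integral {a..c} h = F c - F a" "integral {a..t} h = F t - F a"
    using assms by (auto intro: integral_unique)
  moreover have "h integrable_on {c..t}"
    using integrable_subinterval_real[OF h_int] assms(2) by simp
  ultimately show ?thesis
    by (simp add: has_integral_iff)
qed

lemma gronwall_zero:
  fixes w :: "real \<Rightarrow> real"
  assumes w_cont: "continuous_on {a..b} w"
    and w_nonneg: "\<And>s. s \<in> {a..b} \<Longrightarrow> 0 \<le> w s"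
    and w_le: "\<And>s. s \<in> {a..b} \<Longrightarrow> w s \<le> K * integral {a..s} w"
    and t: "t \<in> {a..b}"
  shows "w t = 0"
proof -
  define W where "W s = integral {a..s} w" for s
  define G where "G s = exp (- K * s) * W s" for s
  have G': "(G has_vector_derivative exp (- K * s) * (w s - K * W s)) (at s within {a..t})"
    if "s \<in> {a..t}" for s
  proof -
    have "continuous_on {a..t} w"
      using w_cont t continuous_on_subset by fastforce
    then have "(W has_real_derivative w s) (at s within {a..t})"
      unfolding W_def using that by (rule integral_has_real_derivative)
    then have "(G has_real_derivative exp (- K * s) * (w s - K * W s)) (at s within {a..t})"
      unfolding G_def by (auto intro!: derivative_eq_intros simp: algebra_simps)
    then show ?thesis
      by (simp add: has_real_derivative_iff_has_vector_derivative)
  qed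
  have "a \<le> t" using t by simp
  have "((\<lambda>s. exp (- K * s) * (w s - K * W s)) has_integral (G t - G a)) {a..t}"
    using fundamental_theorem_of_calculus[OF \<open>a \<le> t\<close> G'] .
  moreover have "exp (- K * s) * (w s - K * W s) \<le> 0" if "s \<in> {a..t}" for s
  proof -
    have "w s - K * W s \<le> 0"
      using w_le[of s] that t unfolding W_def by auto
    then show ?thesis
      by (intro mult_nonneg_nonpos) auto
  qed
  ultimately have "G t - G a \<le> 0"
    by (rule has_integral_le[OF _ has_integral_0])
  moreover have "G a = 0"
    by (simp add: G_def W_def)
  ultimately have "W t \<le> 0"
    by (simp add: G_def mult_le_0_iff)
  moreover have "0 \<le> W t"
    unfolding W_def using t w_nonneg
    by (intro integral_nonneg integrable_continuous_interval continuous_on_subset[OF w_cont]) auto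
  ultimately have "integral {a..t} w = 0"
    by (simp add: W_def)
  then show ?thesis
    using w_le[OF t] w_nonneg[OF t] by simp
qed

lemma last_nonpos_point:
  fixes y :: "real \<Rightarrow> real"
  assumes y_cont: "continuous_on {a..t} y" and y_a: "y a \<le> 0" and "a \<le> t"
  obtains t0 where "a \<le> t0" "t0 \<le> t" "y t0 \<le> 0" "\<And>s. s \<in> {t0<..t} \<Longrightarrow> 0 < y s"
proof -
  define Z where "Z = {a..t} \<inter> y -` {..0}"
  have "closed Z"
    unfolding Z_def using y_cont by (intro continuous_closed_preimage) auto
  moreover have Z_bdd: "bdd_above Z" and "a \<in> Z"
    unfolding Z_def using \<open>a \<le> t\<close> y_a by (auto intro: bdd_aboveI[of _ t])
  ultimately have "Sup Z \<in> Z"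
    using closed_contains_Sup by blast
  moreover have "0 < y s" if "s \<in> {Sup Z<..t}" for s
  proof (rule ccontr)
    assume "\<not> 0 < y s"
    then have "s \<in> Z"
      using that \<open>Sup Z \<in> Z\<close> unfolding Z_def by auto
    then have "s \<le> Sup Z"
      using Z_bdd by (rule cSup_upper)
    with that show False
      by simp
  qed
  ultimately show ?thesis
    using that unfolding Z_def by auto
qed

lemma le_integral_if_bounded_where_pos:
  fixes y h g :: "real \<Rightarrow> real"
  assumes y_eq: "\<And>s. s \<in> {a..b} \<Longrightarrow> (h has_integral (y s - y a)) {a..s}"
    and y_a: "y a \<le> 0"
    and g_cont: "continuous_on {a..b} g" and g_nonneg: "\<And>s. s \<in> {a..b} \<Longrightarrow> 0 \<le> g s"
    and h_le: "\<And>s. s \<in> {a..b} \<Longrightarrow> 0 < y s \<Longrightarrow> h s \<le> g s"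
    and t: "t \<in> {a..b}"
  shows "y t \<le> integral {a..t} g"
proof -
  have g_int: "g integrable_on {c..d}" if "a \<le> c" "d \<le> b" for c d
    using that by (intro integrable_continuous_interval continuous_on_subset[OF g_cont]) auto
  have "continuous_on {a..t} y"
    using continuous_on_if_has_integral_diff[of a b h y] y_eq t continuous_on_subset by fastforce
  \<comment> \<open>Integrate from the last time t0 before t at which y is still nonpositive.\<close>
  then obtain t0 where t0: "a \<le> t0" "t0 \<le> t" "y t0 \<le> 0" and y_pos: "\<And>s. s \<in> {t0<..t} \<Longrightarrow> 0 < y s"
    using y_a t by (elim last_nonpos_point) auto
  have "(h has_integral (y t - y t0)) {t0<..<t}"
    using has_integral_diff_subinterval[where b=b, OF y_eq t0(1,2)] t
    by (simp add: has_integral_Icc_iff_Ioo)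
  moreover have "(g has_integral integral {t0..t} g) {t0<..<t}"
    using g_int[of t0 t] t t0 by (simp flip: has_integral_Icc_iff_Ioo add: has_integral_integral)
  ultimately have "y t - y t0 \<le> integral {t0..t} g"
    by (rule has_integral_le) (use y_pos h_le t t0 in auto)
  also have "\<dots> \<le> integral {a..t} g"
    using t t0 g_nonneg by (intro integral_subset_le g_int) auto
  finally show ?thesis
    using t0(3) by linarith
qed

lemma barrier_nonpos:
  fixes cs :: "((real \<Rightarrow> real) \<times> (real \<Rightarrow> real)) list" and K :: real
  assumes K: "0 \<le> K"
    and eq: "\<And>y h s. (y, h) \<in> set cs \<Longrightarrow> s \<in> {a..b} \<Longrightarrow> (h has_integral (y s - y a)) {a..s}"
    and init: "\<And>y h. (y, h) \<in> set cs \<Longrightarrow> y a \<le> 0"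
    and bound: "\<And>y h s. (y, h) \<in> set cs \<Longrightarrow> s \<in> {a..b} \<Longrightarrow> 0 < y s \<Longrightarrow>
                  h s \<le> K * (\<Sum>c\<leftarrow>cs. max (fst c s) 0)"
    and yh: "(y, h) \<in> set cs" and t: "t \<in> {a..b}"
  shows "y t \<le> 0"
proof -
  define w where "w s = (\<Sum>c\<leftarrow>cs. max (fst c s) 0)" for s
  have y_cont: "continuous_on {a..b} (fst c)" if "c \<in> set cs" for c
    using that by (intro continuous_on_if_has_integral_diff[where h="snd c"] eq) auto
  have "continuous_on {a..b} (\<lambda>s. \<Sum>c\<leftarrow>cs'. max (fst c s) 0)" if "set cs' \<subseteq> set cs" for cs'
    using that by (induction cs') (auto intro!: continuous_intros y_cont)
  then have w_cont: "continuous_on {a..b} w"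
    unfolding w_def by blast
  have w_nonneg: "0 \<le> w s" for s
    unfolding w_def by (intro sum_list_nonneg) auto
  have part_le: "max (z s) 0 \<le> K * integral {a..s} w" if "(z, g) \<in> set cs" "s \<in> {a..b}" for z g s
  proof -
    have "z s \<le> integral {a..s} (\<lambda>r. K * w r)"
    proof (rule le_integral_if_bounded_where_pos[where b=b and h=g])
      show "(g has_integral (z r - z a)) {a..r}" if "r \<in> {a..b}" for r
        using eq \<open>(z, g) \<in> set cs\<close> that .
      show "z a \<le> 0"
        using init \<open>(z, g) \<in> set cs\<close> .
      show "continuous_on {a..b} (\<lambda>r. K * w r)"
        using w_cont by (intro continuous_intros)
      show "0 \<le> K * w r" for r
        using K w_nonneg by simp
      show "g r \<le> K * w r" if "r \<in> {a..b}" "0 < z r" for r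
        unfolding w_def using bound \<open>(z, g) \<in> set cs\<close> that .
    qed fact
    moreover have "0 \<le> integral {a..s} w"
      using that w_nonneg
      by (intro integral_nonneg integrable_continuous_interval continuous_on_subset[OF w_cont]) auto
    ultimately show ?thesis
      using K by simp
  qed
  have "w s \<le> (real (length cs) * K) * integral {a..s} w" if "s \<in> {a..b}" for s
  proof -
    have "max (fst c s) 0 \<le> K * integral {a..s} w" if "c \<in> set cs" for c
      using part_le[of "fst c" "snd c" s] \<open>s \<in> {a..b}\<close> that by simp
    then have "w s \<le> (\<Sum>c\<leftarrow>cs. K * integral {a..s} w)"
      unfolding w_def by (rule sum_list_mono)
    then show ?thesis
      by (simp add: sum_list_triv mult.assoc)
  qed
  then have "w t = 0"
    using gronwall_zero[OF w_cont w_nonneg] t by blast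
  moreover have "max (y t) 0 \<le> w t"
    unfolding w_def using yh by (intro member_le_sum_list) force+
  ultimately show ?thesis
    by simp
qed

lemma continuous_le_has_integral_0_imp_0:
  fixes f g :: "real \<Rightarrow> real"
  assumes f_cont: "continuous_on {a..b} f" and f_nonneg: "\<And>s. s \<in> {a..b} \<Longrightarrow> 0 \<le> f s"
    and f_le: "\<And>s. s \<in> {a..b} \<Longrightarrow> f s \<le> g s" and g: "(g has_integral 0) {a..b}"
    and "a < b" "s \<in> {a..b}"
  shows "f s = 0"
proof -
  have f_int: "f integrable_on {a..b}"
    using f_cont by (rule integrable_continuous_interval)
  have "integral {a..b} f \<le> 0"
    using has_integral_le[OF integrable_integral[OF f_int] g] f_le .
  moreover have "0 \<le> integral {a..b} f"
    using f_int f_nonneg by (rule integral_nonneg)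
  ultimately have "(f has_integral 0) (cbox a b)"
    using f_int by (simp add: has_integral_iff)
  then show ?thesis
    using has_integral_0_cbox_imp_0[of a b f] f_cont f_nonneg assms(5,6) by auto
qed

lemma has_integral_exp_decay:
  fixes lam :: real
  assumes "a \<le> t"
  shows "((\<lambda>s. lam * exp (- lam * (s - a))) has_integral (1 - exp (- lam * (t - a)))) {a..t}"
proof -
  have "((\<lambda>s. - exp (- lam * (s - a))) has_vector_derivative lam * exp (- lam * (s - a)))
      (at s within {a..t})" for s
    unfolding has_real_derivative_iff_has_vector_derivative[symmetric]
    by (auto intro!: derivative_eq_intros)
  then have "((\<lambda>s. lam * exp (- lam * (s - a))) has_integral
      (- exp (- lam * (t - a)) - - exp (- lam * (a - a)))) {a..t}"
    by (intro fundamental_theorem_of_calculus[OF assms])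
  then show ?thesis
    by simp
qed

lemma has_integral_components3:
  fixes f g h :: "real \<Rightarrow> real"
  assumes "((\<lambda>s. (f s, g s, h s)) has_integral (p, q, r)) A"
  shows "(f has_integral p) A" "(g has_integral q) A" "(h has_integral r) A"
  using has_integral_linear[OF assms bounded_linear_fst]
    has_integral_linear[OF assms bounded_linear_fst_comp[OF bounded_linear_snd]]
    has_integral_linear[OF assms bounded_linear_snd_comp[OF bounded_linear_snd]]
  by (simp_all add: o_def)

lemma abs_mult3_le:
  fixes b s i bmax B :: real
  assumes "0 \<le> b" "b \<le> bmax" "\<bar>s\<bar> \<le> B" "\<bar>i\<bar> \<le> B"
  shows "\<bar>b * s * i\<bar> \<le> bmax * B * \<bar>i\<bar>" and "\<bar>b * s * i\<bar> \<le> bmax * B * \<bar>s\<bar>"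
proof -
  have "\<bar>b * s * i\<bar> = (b * \<bar>s\<bar>) * \<bar>i\<bar>"
    using assms(1) by (simp add: abs_mult)
  also have "\<dots> \<le> (bmax * B) * \<bar>i\<bar>"
    using assms by (intro mult_right_mono mult_mono) auto
  finally show "\<bar>b * s * i\<bar> \<le> bmax * B * \<bar>i\<bar>" .
  have "\<bar>b * s * i\<bar> = (b * \<bar>i\<bar>) * \<bar>s\<bar>"
    using assms(1) by (simp add: abs_mult algebra_simps)
  also have "\<dots> \<le> (bmax * B) * \<bar>s\<bar>"
    using assms by (intro mult_right_mono mult_mono) auto
  finally show "\<bar>b * s * i\<bar> \<le> bmax * B * \<bar>s\<bar>" .
qed

lemma neg_mult3_le_neg_parts:
  fixes b s i bmax B :: real
  assumes "0 \<le> b" "b \<le> bmax" "\<bar>s\<bar> \<le> B" "\<bar>i\<bar> \<le> B"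
  shows "- (b * s * i) \<le> bmax * B * (max (- s) 0 + max (- i) 0)"
proof -
  have kB: "0 \<le> bmax * B"
    using assms by (smt (verit) abs_ge_zero mult_nonneg_nonneg)
  note bounds = abs_mult3_le[OF assms]
  consider "0 \<le> s" "0 \<le> i" | "s < 0" | "i < 0"
    by linarith
  then show ?thesis
  proof cases
    case 1
    then have "0 \<le> b * s * i"
      using assms(1) by simp
    moreover have "0 \<le> bmax * B * (max (- s) 0 + max (- i) 0)"
      using kB by simp
    ultimately show ?thesis
      by linarith
  next
    case 2
    then have "bmax * B * \<bar>s\<bar> \<le> bmax * B * (max (- s) 0 + max (- i) 0)"
      using kB by (intro mult_left_mono) auto
    then show ?thesis
      using bounds(2) by linarith
  next
    case 3
    then have "bmax * B * \<bar>i\<bar> \<le> bmax * B * (max (- s) 0 + max (- i) 0)"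
      using kB by (intro mult_left_mono) auto
    then show ?thesis
      using bounds(1) by linarith
  qed
qed

lemma mult3_le_neg_part:
  fixes b s i bmax B :: real
  assumes "0 \<le> b" "b \<le> bmax" "\<bar>s\<bar> \<le> B" "\<bar>i\<bar> \<le> B" and "s \<le> 0"
  shows "b * s * i \<le> bmax * B * max (- i) 0"
proof (cases "0 \<le> i")
  case True
  have "b * s * i \<le> 0"
    using mult_nonpos_nonneg[OF mult_nonneg_nonpos[OF assms(1,5)] True] .
  moreover have "0 \<le> bmax * B"
    using assms by (smt (verit) abs_ge_zero mult_nonneg_nonneg)
  ultimately show ?thesis
    by (simp add: True)
next
  case False
  then show ?thesis
    using abs_mult3_le(1)[OF assms(1-4)] by simp
qed

lemma Pi_violation_rates:
  fixes b g eta s e i bmax gmax B :: real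
  assumes b: "0 \<le> b" "b \<le> bmax" and g: "0 \<le> g" "g \<le> gmax" and eta: "0 \<le> eta"
    and si: "\<bar>s\<bar> \<le> B" "\<bar>i\<bar> \<le> B"
  defines "w \<equiv> max (- s) 0 + (max (- e) 0 + (max (- i) 0 + max (s + e + i - 1) 0))"
    and "K \<equiv> bmax * B + eta + gmax"
  shows "s < 0 \<Longrightarrow> b * s * i \<le> K * w"
    and "e < 0 \<Longrightarrow> eta * e - b * s * i \<le> K * w"
    and "i < 0 \<Longrightarrow> g * i - eta * e \<le> K * w"
    and "1 < s + e + i \<Longrightarrow> - (g * i) \<le> K * w"
proof -
  have k: "0 \<le> bmax * B"
    using b si by (smt (verit) abs_ge_zero mult_nonneg_nonneg)
  have scale: "a * p \<le> K * w" if "0 \<le> a" "a \<le> K" "0 \<le> p" "p \<le> w" for a p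
    using that by (intro mult_mono) auto
  show "b * s * i \<le> K * w" if "s < 0"
  proof -
    have "b * s * i \<le> bmax * B * max (- i) 0"
      using mult3_le_neg_part[OF b si] that by simp
    also have "\<dots> \<le> K * w"
      using k g eta by (intro scale) (auto simp: K_def w_def)
    finally show ?thesis .
  qed
  show "eta * e - b * s * i \<le> K * w" if "e < 0"
  proof -
    have "eta * e \<le> 0"
      using eta that by (simp add: mult_nonneg_nonpos)
    then have "eta * e - b * s * i \<le> bmax * B * (max (- s) 0 + max (- i) 0)"
      using neg_mult3_le_neg_parts[OF b si] by simp
    also have "\<dots> \<le> K * w"
      using k g eta by (intro scale) (auto simp: K_def w_def)
    finally show ?thesis .
  qed
  show "g * i - eta * e \<le> K * w" if "i < 0"
  proof -
    have "g * i \<le> 0"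
      using g that by (simp add: mult_nonneg_nonpos)
    moreover have "- (eta * e) \<le> eta * max (- e) 0"
      using mult_left_mono[of "- e" "max (- e) 0" eta] eta by simp
    ultimately have "g * i - eta * e \<le> eta * max (- e) 0"
      by simp
    also have "\<dots> \<le> K * w"
      using k g eta by (intro scale) (auto simp: K_def w_def)
    finally show ?thesis .
  qed
  show "- (g * i) \<le> K * w" if "1 < s + e + i"
  proof -
    have "- (g * i) \<le> gmax * max (- i) 0"
      using g by (cases "0 \<le> i") (auto simp: mult_right_mono)
    also have "\<dots> \<le> K * w"
      using k g eta by (intro scale) (auto simp: K_def w_def)
    finally show ?thesis .
  qed
qed

lemma box_violation_rates:
  fixes b g eta s e i gnom Imax :: real
  assumes bs: "b * s \<le> gnom" and i: "0 \<le> i" and g: "gnom \<le> g" and pos: "0 < eta" "0 < gnom"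
  defines "w \<equiv> max (e - gnom / eta * Imax) 0 + max (i - Imax) 0"
  shows "gnom / eta * Imax < e \<Longrightarrow> b * s * i - eta * e \<le> (gnom + eta) * w"
    and "Imax < i \<Longrightarrow> eta * e - g * i \<le> (gnom + eta) * w"
proof -
  have E_scaled: "eta * (gnom / eta * Imax) = gnom * Imax"
    using pos by simp
  have bound: "gnom * max (i - Imax) 0 + eta * max (e - gnom / eta * Imax) 0 \<le> (gnom + eta) * w"
    using pos by (simp add: w_def algebra_simps add_mono mult_left_mono)
  show "b * s * i - eta * e \<le> (gnom + eta) * w" if "gnom / eta * Imax < e"
  proof -
    have "b * s * i \<le> gnom * i"
      using bs i by (rule mult_right_mono)
    moreover have "gnom * Imax < eta * e"
      using that pos E_scaled by (metis mult_strict_left_mono)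
    moreover have "gnom * (i - Imax) \<le> gnom * max (i - Imax) 0"
      using pos by (intro mult_left_mono) auto
    moreover have "0 \<le> eta * max (e - gnom / eta * Imax) 0"
      using pos by simp
    ultimately show ?thesis
      using bound by (simp add: algebra_simps)
  qed
  show "eta * e - g * i \<le> (gnom + eta) * w" if "Imax < i"
  proof -
    have "gnom * Imax < gnom * i"
      using that pos by simp
    moreover have "gnom * i \<le> g * i"
      using g i by (rule mult_right_mono)
    moreover have "eta * (e - gnom / eta * Imax) \<le> eta * max (e - gnom / eta * Imax) 0"
      using pos by (intro mult_left_mono) auto
    moreover have "0 \<le> gnom * max (i - Imax) 0"
      using pos by simp
    ultimately show ?thesis
      using bound E_scaled by (simp add: algebra_simps)
  qed
qed

lemma lyapunov_rate:
  fixes b g s e i c eta bnom gnom :: real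
  assumes "0 \<le> s" "0 \<le> e" "0 \<le> i" "0 \<le> b" "b \<le> bnom" "gnom \<le> g" "0 < gnom" "c \<le> 1"
    and S_small: "bnom * s \<le> (2 * c - 1) * gnom"
  shows "(b * s * i - eta * e) + c * (eta * e - g * i) \<le> - ((1 - c) * min eta gnom) * (e + c * i)"
proof -
  define m where "m = min eta gnom"
  have "b * s \<le> bnom * s"
    using assms by (intro mult_right_mono)
  with S_small have bs: "b * s \<le> (2 * c - 1) * gnom"
    by linarith
  moreover have "0 \<le> b * s"
    using assms by simp
  ultimately have "0 \<le> (2 * c - 1) * gnom"
    by linarith
  then have "0 \<le> 2 * c - 1"
    using \<open>0 < gnom\<close> by (meson mult_neg_pos not_le)
  then have "c * gnom \<le> c * g"
    using assms(6) by (intro mult_left_mono) auto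
  with bs have "(b * s - c * g) * i \<le> - ((1 - c) * gnom) * i"
    using assms(3) by (intro mult_right_mono) (auto simp: algebra_simps)
  moreover have "(1 - c) * m * e \<le> (1 - c) * eta * e"
    using assms by (intro mult_right_mono mult_left_mono) (auto simp: m_def)
  moreover have "m * c \<le> gnom"
  proof (cases "0 \<le> m")
    case True
    then have "m * c \<le> m"
      using \<open>c \<le> 1\<close> by (simp add: mult_left_le)
    then show ?thesis
      unfolding m_def by linarith
  next
    case False
    then have "m * c \<le> 0"
      using \<open>0 \<le> 2 * c - 1\<close> by (simp add: mult_nonpos_nonneg)
    then show ?thesis
      using \<open>0 < gnom\<close> by linarith
  qed
  then have "(1 - c) * (m * c) * i \<le> (1 - c) * gnom * i"
    using assms by (intro mult_right_mono mult_left_mono) auto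
  ultimately show ?thesis
    unfolding m_def[symmetric] by (simp add: algebra_simps)
qed

lemma mem_Pi_set_iff: "(s, e, i) \<in> Pi_set \<longleftrightarrow> 0 \<le> s \<and> 0 \<le> e \<and> 0 \<le> i \<and> s + e + i \<le> 1"
  by (auto simp: Pi_set_def)

lemma Xf_subset_Pi_set: "Xf eta bnom gnom Imax \<subseteq> Pi_set"
  by (auto simp: Xf_def DFE_def Pi_set_def)

lemma Xf_subset_G_Pi: "0 \<le> Imax \<Longrightarrow> Xf eta bnom gnom Imax \<subseteq> G_Pi Imax"
  by (auto simp: Xf_def DFE_def G_Pi_def Pi_set_def)

locale seir_trajectory =
  fixes eta bmin bnom gnom gmax :: real
    and u :: "real \<Rightarrow> control" and x0 :: state and x :: "real \<Rightarrow> state"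
  assumes eta_pos: "0 < eta"
    and bmin_pos: "0 < bmin" and bmin_le_bnom: "bmin \<le> bnom"
    and gnom_pos: "0 < gnom" and gnom_le_gmax: "gnom \<le> gmax"
    and admissible: "admissible bmin bnom gnom gmax u"
    and solution: "is_sol eta u x0 x"
begin

definition S :: "real \<Rightarrow> real" where "S t = fst (x t)"
definition E :: "real \<Rightarrow> real" where "E t = fst (snd (x t))"
definition I :: "real \<Rightarrow> real" where "I t = snd (snd (x t))"
definition \<beta> :: "real \<Rightarrow> real" where "\<beta> t = fst (u t)"
definition \<gamma> :: "real \<Rightarrow> real" where "\<gamma> t = snd (u t)"

lemma x_eq: "x t = (S t, E t, I t)"
  by (simp add: S_def E_def I_def)

lemma x0_eq: "x0 = (S 0, E 0, I 0)"
  using solution by (simp add: is_sol_def flip: x_eq)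

lemma control_bounds:
  assumes "0 \<le> t"
  shows "bmin \<le> \<beta> t" "\<beta> t \<le> bnom" "gnom \<le> \<gamma> t" "\<gamma> t \<le> gmax"
  using admissible assms by (auto simp: admissible_def Uset_def \<beta>_def \<gamma>_def mem_Times_iff)

lemma has_integral_SEI_from_0:
  assumes "0 \<le> t"
  shows "((\<lambda>s. - (\<beta> s * S s * I s)) has_integral (S t - S 0)) {0..t}"
    and "((\<lambda>s. \<beta> s * S s * I s - eta * E s) has_integral (E t - E 0)) {0..t}"
    and "((\<lambda>s. eta * E s - \<gamma> s * I s) has_integral (I t - I 0)) {0..t}"
proof -
  have "seir_rhs eta (u s) (x s) =
      (- (\<beta> s * S s * I s), \<beta> s * S s * I s - eta * E s, eta * E s - \<gamma> s * I s)" for s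
    by (simp add: seir_rhs_def x_eq \<beta>_def \<gamma>_def split: prod.splits)
  then have "((\<lambda>s. (- (\<beta> s * S s * I s), \<beta> s * S s * I s - eta * E s, eta * E s - \<gamma> s * I s))
      has_integral (S t - S 0, E t - E 0, I t - I 0)) {0..t}"
    using solution assms by (simp add: is_sol_def x_eq x0_eq)
  then show "((\<lambda>s. - (\<beta> s * S s * I s)) has_integral (S t - S 0)) {0..t}"
    and "((\<lambda>s. \<beta> s * S s * I s - eta * E s) has_integral (E t - E 0)) {0..t}"
    and "((\<lambda>s. eta * E s - \<gamma> s * I s) has_integral (I t - I 0)) {0..t}"
    by (rule has_integral_components3)+
qed

lemma S_has_integral:
  "0 \<le> a \<Longrightarrow> a \<le> t \<Longrightarrow> ((\<lambda>s. - (\<beta> s * S s * I s)) has_integral (S t - S a)) {a..t}"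
  by (rule has_integral_diff_subinterval[where b=t]) (auto intro: has_integral_SEI_from_0)

lemma E_has_integral:
  "0 \<le> a \<Longrightarrow> a \<le> t \<Longrightarrow> ((\<lambda>s. \<beta> s * S s * I s - eta * E s) has_integral (E t - E a)) {a..t}"
  by (rule has_integral_diff_subinterval[where b=t]) (auto intro: has_integral_SEI_from_0)

lemma I_has_integral:
  "0 \<le> a \<Longrightarrow> a \<le> t \<Longrightarrow> ((\<lambda>s. eta * E s - \<gamma> s * I s) has_integral (I t - I a)) {a..t}"
  by (rule has_integral_diff_subinterval[where b=t]) (auto intro: has_integral_SEI_from_0)

lemma continuous_on_SEI:
  "continuous_on {0..t} S" "continuous_on {0..t} E" "continuous_on {0..t} I"
  by (rule continuous_on_if_has_integral_diff, rule has_integral_SEI_from_0, simp)+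

lemma S_I_bounded:
  obtains B where "\<And>s. s \<in> {0..T} \<Longrightarrow> \<bar>S s\<bar> \<le> B \<and> \<bar>I s\<bar> \<le> B"
proof -
  have "compact ((\<lambda>s. \<bar>S s\<bar> + \<bar>I s\<bar>) ` {0..T})"
    by (intro compact_continuous_image continuous_intros continuous_on_SEI compact_Icc)
  then obtain B where B: "\<forall>s \<in> {0..T}. \<bar>S s\<bar> + \<bar>I s\<bar> \<le> B"
    by (auto dest!: compact_imp_bounded simp: bounded_real)
  show ?thesis
  proof (rule that)
    fix s
    assume "s \<in> {0..T}"
    then show "\<bar>S s\<bar> \<le> B \<and> \<bar>I s\<bar> \<le> B"
      using B abs_ge_zero[of "S s"] abs_ge_zero[of "I s"] by fastforce
  qed
qed

lemma Pi_invariant: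
  assumes x0: "x0 \<in> Pi_set" and t: "0 \<le> t"
  shows "x t \<in> Pi_set"
proof -
  obtain B where B: "\<And>s. s \<in> {0..t} \<Longrightarrow> \<bar>S s\<bar> \<le> B \<and> \<bar>I s\<bar> \<le> B"
    using S_I_bounded by blast
  define K where "K = bnom * B + eta + gmax"
  define cs where "cs =
    [(\<lambda>s. - S s, \<lambda>s. \<beta> s * S s * I s),
     (\<lambda>s. - E s, \<lambda>s. eta * E s - \<beta> s * S s * I s),
     (\<lambda>s. - I s, \<lambda>s. \<gamma> s * I s - eta * E s),
     (\<lambda>s. S s + E s + I s - 1, \<lambda>s. - (\<gamma> s * I s))]"
  have "y s \<le> 0" if "(y, h) \<in> set cs" "s \<in> {0..t}" for y h s
  proof (rule barrier_nonpos[where K=K, OF _ _ _ _ that])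
    show "0 \<le> K"
      using B[of 0] t bmin_pos bmin_le_bnom eta_pos gnom_pos gnom_le_gmax by (auto simp: K_def)
    show "(h has_integral (y s - y 0)) {0..s}" if "(y, h) \<in> set cs" "s \<in> {0..t}" for y h s
    proof -
      note integrals = has_integral_SEI_from_0[of s]
      have "((\<lambda>r. - (\<beta> r * S r * I r) + (\<beta> r * S r * I r - eta * E r) + (eta * E r - \<gamma> r * I r))
          has_integral (S s - S 0 + (E s - E 0) + (I s - I 0))) {0..s}"
        using that by (intro has_integral_add integrals) auto
      then show ?thesis
        using that integrals[THEN has_integral_neg] by (auto simp: cs_def algebra_simps)
    qed
    show "y 0 \<le> 0" if "(y, h) \<in> set cs" for y h
      using x0 that by (auto simp: cs_def x0_eq mem_Pi_set_iff)
    show "h s \<le> K * (\<Sum>c\<leftarrow>cs. max (fst c s) 0)" if "(y, h) \<in> set cs" "s \<in> {0..t}" "0 < y s"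
      for y h s
    proof -
      have s0: "0 \<le> s"
        using that(2) by simp
      note ctrl = control_bounds[OF s0]
      have "0 \<le> \<beta> s" "0 \<le> \<gamma> s"
        using ctrl bmin_pos gnom_pos by linarith+
      note rates = Pi_violation_rates[where s="S s" and e="E s" and i="I s" and B=B,
          OF this(1) ctrl(2) this(2) ctrl(4) less_imp_le[OF eta_pos], folded K_def]
      show ?thesis
        using that B[OF that(2)] rates by (auto simp: cs_def)
    qed
  qed
  then have "- S t \<le> 0" "- E t \<le> 0" "- I t \<le> 0" "S t + E t + I t - 1 \<le> 0"
    using t by (fastforce simp: cs_def)+
  then show ?thesis
    by (simp add: x_eq mem_Pi_set_iff)
qed

end

locale seir_trajectory_in_Pi = seir_trajectory +
  assumes x0_in_Pi: "x0 \<in> Pi_set"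
begin

lemma SEI_in_Pi:
  assumes "0 \<le> t"
  shows "0 \<le> S t" "0 \<le> E t" "0 \<le> I t" "S t + E t + I t \<le> 1"
  using Pi_invariant[OF x0_in_Pi assms] by (simp_all add: x_eq mem_Pi_set_iff)

lemma S_antimono:
  assumes "0 \<le> a" "a \<le> t"
  shows "S t \<le> S a"
proof -
  have "((\<lambda>s. \<beta> s * S s * I s) has_integral (S a - S t)) {a..t}"
    using has_integral_neg[OF S_has_integral[OF assms]] by simp
  moreover have "0 \<le> \<beta> s * S s * I s" if "s \<in> {a..t}" for s
    using that assms SEI_in_Pi[of s] control_bounds(1)[of s] bmin_pos by simp
  ultimately have "0 \<le> S a - S t"
    by (rule has_integral_nonneg)
  then show ?thesis
    by simp
qed

lemma E_I_box_invariant: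
  assumes S0: "S 0 \<le> gnom / bnom" and E0: "E 0 \<le> gnom / eta * Imax" and I0: "I 0 \<le> Imax"
    and t: "0 \<le> t"
  shows "E t \<le> gnom / eta * Imax" "I t \<le> Imax"
proof -
  define cs where "cs =
    [(\<lambda>s. E s - gnom / eta * Imax, \<lambda>s. \<beta> s * S s * I s - eta * E s),
     (\<lambda>s. I s - Imax, \<lambda>s. eta * E s - \<gamma> s * I s)]"
  have "y s \<le> 0" if "(y, h) \<in> set cs" "s \<in> {0..t}" for y h s
  proof (rule barrier_nonpos[where K="gnom + eta", OF _ _ _ _ that])
    show "0 \<le> gnom + eta"
      using gnom_pos eta_pos by simp
    show "(h has_integral (y s - y 0)) {0..s}" if "(y, h) \<in> set cs" "s \<in> {0..t}" for y h s
      using that has_integral_SEI_from_0[of s] by (auto simp: cs_def)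
    show "y 0 \<le> 0" if "(y, h) \<in> set cs" for y h
      using that E0 I0 by (auto simp: cs_def)
    show "h s \<le> (gnom + eta) * (\<Sum>c\<leftarrow>cs. max (fst c s) 0)"
      if "(y, h) \<in> set cs" "s \<in> {0..t}" "0 < y s" for y h s
    proof -
      have s0: "0 \<le> s"
        using that(2) by simp
      note ctrl = control_bounds[OF s0] and SEI = SEI_in_Pi[OF s0]
      have "\<beta> s * S s \<le> bnom * (gnom / bnom)"
        using ctrl SEI S0 S_antimono[OF order_refl s0] bmin_pos by (intro mult_mono) auto
      then have "\<beta> s * S s \<le> gnom"
        using bmin_pos bmin_le_bnom by simp
      note rates = box_violation_rates[where e="E s" and Imax=Imax, OF this SEI(3) ctrl(3) eta_pos gnom_pos]
      show ?thesis
        using that rates by (auto simp: cs_def)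
    qed
  qed
  then show "E t \<le> gnom / eta * Imax" "I t \<le> Imax"
    using t by (fastforce simp: cs_def)+
qed

lemma disease_free_invariant:
  assumes E0: "E 0 = 0" and I0: "I 0 = 0" and t: "0 \<le> t"
  shows "E t = 0" "I t = 0"
proof -
  define v where "v s = E s + I s" for s
  have v_cont: "continuous_on {0..t} v"
    unfolding v_def by (intro continuous_intros continuous_on_SEI)
  have "v s = 0" if "s \<in> {0..t}" for s
  proof (rule gronwall_zero[where K=bnom, OF v_cont _ _ that])
    show "0 \<le> v r" if "r \<in> {0..t}" for r
      using that SEI_in_Pi[of r] by (simp add: v_def)
    show "v r \<le> bnom * integral {0..r} v" if "r \<in> {0..t}" for r
    proof -
      have "((\<lambda>q. (\<beta> q * S q * I q - eta * E q) + (eta * E q - \<gamma> q * I q)) has_integral v r) {0..r}"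
        using that has_integral_add[OF has_integral_SEI_from_0(2,3)] E0 I0 by (simp add: v_def)
      moreover have "((\<lambda>q. bnom * v q) has_integral (bnom * integral {0..r} v)) {0..r}"
        using that by (intro has_integral_mult_right integrable_integral integrable_continuous_interval
            continuous_on_subset[OF v_cont]) auto
      moreover have "(\<beta> q * S q * I q - eta * E q) + (eta * E q - \<gamma> q * I q) \<le> bnom * v q"
        if "q \<in> {0..r}" for q
      proof -
        have q0: "0 \<le> q"
          using that by simp
        note ctrl = control_bounds[OF q0] and SEI = SEI_in_Pi[OF q0]
        have "\<beta> q * S q \<le> bnom * 1"
          using ctrl SEI bmin_pos by (intro mult_mono) auto
        then have "\<beta> q * S q * I q \<le> bnom * I q"
          using SEI(3) by (simp add: mult_right_mono)
        moreover have "0 \<le> \<gamma> q * I q" "bnom * I q \<le> bnom * v q"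
          using ctrl SEI gnom_pos bmin_pos bmin_le_bnom by (auto simp: v_def)
        ultimately show ?thesis
          by simp
      qed
      ultimately show ?thesis
        by (rule has_integral_le)
    qed
  qed
  then have "E t + I t = 0"
    using t by (simp add: v_def)
  then show "E t = 0" "I t = 0"
    using SEI_in_Pi[OF t] by simp_all
qed

lemma S_decreases_unless_disease_free:
  assumes T: "0 < T" and S0: "0 < S 0" and ST: "S T = S 0"
  shows "E 0 = 0 \<and> I 0 = 0"
proof -
  have S_const: "S s = S 0" if "s \<in> {0..T}" for s
    using S_antimono[of 0 s] S_antimono[of s T] that ST by fastforce
  have I_zero: "I s = 0" if "s \<in> {0..T}" for s
  proof -
    have "bmin * S 0 * I s = 0"
    proof (rule continuous_le_has_integral_0_imp_0[where f="\<lambda>r. bmin * S 0 * I r", OF _ _ _ _ T that])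
      show "continuous_on {0..T} (\<lambda>r. bmin * S 0 * I r)"
        by (intro continuous_intros continuous_on_SEI)
      show "0 \<le> bmin * S 0 * I r" if "r \<in> {0..T}" for r
        using that S0 bmin_pos SEI_in_Pi[of r] by simp
      show "bmin * S 0 * I r \<le> \<beta> r * S r * I r" if "r \<in> {0..T}" for r
        using that S0 S_const[OF that] control_bounds(1)[of r] SEI_in_Pi[of r]
        by (intro mult_right_mono) auto
      show "((\<lambda>r. \<beta> r * S r * I r) has_integral 0) {0..T}"
        using has_integral_neg[OF has_integral_SEI_from_0(1)[of T]] T ST by simp
    qed
    then show ?thesis
      using S0 bmin_pos by simp
  qed
  have "eta * E 0 = 0"
  proof (rule continuous_le_has_integral_0_imp_0[where f="\<lambda>r. eta * E r" and g="\<lambda>r. eta * E r",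
        OF _ _ _ _ T])
    show "continuous_on {0..T} (\<lambda>r. eta * E r)"
      by (intro continuous_intros continuous_on_SEI)
    show "0 \<le> eta * E r" if "r \<in> {0..T}" for r
      using that eta_pos SEI_in_Pi[of r] by simp
    have "((\<lambda>r. eta * E r - \<gamma> r * I r) has_integral 0) {0..T}"
      using has_integral_SEI_from_0(3)[of T] I_zero T by simp
    then show "((\<lambda>r. eta * E r) has_integral 0) {0..T}"
      by (rule has_integral_eq[rotated]) (simp add: I_zero)
  qed (use T in auto)
  then show ?thesis
    using I_zero[of 0] eta_pos T by simp
qed

lemma lyapunov_rate_along_trajectory:
  assumes "0 \<le> a" "a \<le> s" "c \<le> 1" "bnom * S a \<le> (2 * c - 1) * gnom"
  shows "(\<beta> s * S s * I s - eta * E s) + c * (eta * E s - \<gamma> s * I s)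
    \<le> - ((1 - c) * min eta gnom) * (E s + c * I s)"
proof -
  have s0: "0 \<le> s"
    using assms by linarith
  have "bnom * S s \<le> bnom * S a"
    using S_antimono[OF assms(1,2)] bmin_pos bmin_le_bnom by (intro mult_left_mono) auto
  with assms(4) have "bnom * S s \<le> (2 * c - 1) * gnom"
    by linarith
  then show ?thesis
    using control_bounds[OF s0] SEI_in_Pi[OF s0] bmin_pos gnom_pos assms(3)
    by (intro lyapunov_rate[where bnom=bnom]) auto
qed

lemma E_cI_decay:
  assumes a: "0 \<le> a" "a \<le> t" and c: "c \<le> 1" and Sa: "bnom * S a \<le> (2 * c - 1) * gnom"
  shows "E t + c * I t \<le> (E a + c * I a) * exp (- ((1 - c) * min eta gnom) * (t - a))"
proof -
  define lam where "lam = (1 - c) * min eta gnom"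
  define V where "V s = E s + c * I s" for s
  define y where "y s = V s - V a * exp (- lam * (s - a))" for s
  define h where "h s = (\<beta> s * S s * I s - eta * E s) + c * (eta * E s - \<gamma> s * I s)
    + V a * (lam * exp (- lam * (s - a)))" for s
  have "y t \<le> integral {a..t} (\<lambda>_. 0)"
  proof (rule le_integral_if_bounded_where_pos[where b=t and h=h])
    show "(h has_integral (y s - y a)) {a..s}" if "s \<in> {a..t}" for s
    proof -
      have "(h has_integral ((E s - E a) + c * (I s - I a) + V a * (1 - exp (- lam * (s - a))))) {a..s}"
        unfolding h_def using that a
        by (intro has_integral_add has_integral_mult_right E_has_integral I_has_integral
            has_integral_exp_decay) auto
      then show ?thesis
        by (simp add: y_def V_def algebra_simps)
    qed
    show "h s \<le> 0" if "s \<in> {a..t}" "0 < y s" for s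
    proof -
      have "0 \<le> lam * y s"
        using c eta_pos gnom_pos that(2) by (simp add: lam_def)
      then show ?thesis
        using lyapunov_rate_along_trajectory[of a s c] that a c Sa
        by (simp add: h_def y_def V_def lam_def algebra_simps)
    qed
  qed (use a in \<open>auto simp: y_def\<close>)
  then show ?thesis
    by (simp add: y_def V_def lam_def)
qed

lemma E_I_exponential_decay_if_below_threshold:
  assumes a: "0 \<le> a" and Sa: "S a < gnom / bnom"
  shows "\<exists>C\<ge>0. \<exists>lam>0. \<forall>t\<ge>0. E t + I t \<le> C * exp (- lam * t)"
proof -
  \<comment> \<open>The margin of S a below the threshold gives the weight c < 1 of the Lyapunov function E + c I.\<close>
  define c where "c = (bnom * S a / gnom + 1) / 2"
  define lam where "lam = (1 - c) * min eta gnom"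
  define Va where "Va = E a + c * I a"
  have "0 \<le> bnom * S a / gnom" "bnom * S a / gnom < 1"
    using SEI_in_Pi[OF a] Sa bmin_pos bmin_le_bnom gnom_pos by (simp_all add: field_simps)
  then have c: "1 / 2 \<le> c" "c < 1"
    by (simp_all add: c_def)
  have "2 * c - 1 = bnom * S a / gnom"
    by (simp add: c_def field_simps)
  then have c_margin: "bnom * S a = (2 * c - 1) * gnom"
    using gnom_pos by simp
  have lam: "0 < lam"
    using c eta_pos gnom_pos by (simp add: lam_def)
  have Va: "0 \<le> Va"
    using SEI_in_Pi[OF a] c by (simp add: Va_def)
  have "E t + I t \<le> ((2 * Va + 1) * exp (lam * a)) * exp (- lam * t)" if t: "0 \<le> t" for t
  proof (cases "a \<le> t")
    case True
    have "1 * I t \<le> (2 * c) * I t"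
      using SEI_in_Pi[OF t] c by (intro mult_right_mono) auto
    then have "E t + I t \<le> 2 * (E t + c * I t)"
      using SEI_in_Pi[OF t] by (simp add: algebra_simps)
    also have "\<dots> \<le> 2 * (Va * exp (- lam * (t - a)))"
      using E_cI_decay[OF a True, of c] c c_margin by (simp add: Va_def lam_def)
    also have "\<dots> = (2 * Va * exp (lam * a)) * exp (- lam * t)"
      by (simp add: algebra_simps flip: exp_add)
    also have "\<dots> \<le> ((2 * Va + 1) * exp (lam * a)) * exp (- lam * t)"
      by (intro mult_right_mono) auto
    finally show ?thesis .
  next
    case False
    have "E t + I t \<le> 1"
      using SEI_in_Pi[OF t] by linarith
    also have "1 \<le> exp (lam * (a - t))"
      using False lam by simp
    also have "\<dots> = exp (lam * a) * exp (- lam * t)"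
      by (simp add: algebra_simps flip: exp_add)
    also have "\<dots> \<le> ((2 * Va + 1) * exp (lam * a)) * exp (- lam * t)"
      using Va by (intro mult_right_mono) auto
    finally show ?thesis .
  qed
  then show ?thesis
    using lam Va by (intro exI[of _ "(2 * Va + 1) * exp (lam * a)"] exI[of _ lam]) auto
qed

lemma E_I_exponential_decay:
  assumes S0: "S 0 \<le> gnom / bnom"
  shows "\<exists>C\<ge>0. \<exists>lam>0. \<forall>t\<ge>0. E t + I t \<le> C * exp (- lam * t)"
proof (cases "S 1 < gnom / bnom")
  case True
  then show ?thesis
    by (rule E_I_exponential_decay_if_below_threshold[OF zero_le_one])
next
  case False
  moreover have "S 1 \<le> S 0"
    using S_antimono[of 0 1] by simp
  moreover have "0 < gnom / bnom"
    using bmin_pos bmin_le_bnom gnom_pos by simp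
  ultimately have "S 1 = S 0" "0 < S 0"
    using S0 by linarith+
  then have "E 0 = 0" "I 0 = 0"
    using S_decreases_unless_disease_free[of 1] by simp_all
  then have "\<forall>t\<ge>0. E t + I t \<le> 0 * exp (- 1 * t)"
    using disease_free_invariant by simp
  then show ?thesis
    using zero_less_one order_refl by blast
qed

lemma Xf_cases:
  assumes "x0 \<in> Xf eta bnom gnom Imax"
  obtains "S 0 \<le> gnom / bnom" "E 0 \<le> gnom / eta * Imax" "I 0 \<le> Imax"
    | "E 0 = 0" "I 0 = 0"
  using assms by (auto simp: Xf_def DFE_def x0_eq)

lemma Xf_trajectory_in_G_Pi:
  assumes "x0 \<in> Xf eta bnom gnom Imax" "0 \<le> Imax" "0 \<le> t"
  shows "x t \<in> G_Pi Imax"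
proof -
  have "I t \<le> Imax"
  proof (rule Xf_cases[OF assms(1)])
    assume "S 0 \<le> gnom / bnom" "E 0 \<le> gnom / eta * Imax" "I 0 \<le> Imax"
    then show ?thesis
      using E_I_box_invariant(2) assms(3) by blast
  next
    assume "E 0 = 0" "I 0 = 0"
    then show ?thesis
      using disease_free_invariant(2) assms(2,3) by simp
  qed
  then show ?thesis
    using Pi_invariant[OF x0_in_Pi assms(3)] by (simp add: G_Pi_def x_eq)
qed

lemma Xf_trajectory_decays:
  assumes "x0 \<in> Xf eta bnom gnom Imax"
  shows "\<exists>C\<ge>0. \<exists>lam>0. \<forall>t\<ge>0. E t + I t \<le> C * exp (- lam * t)"
proof (rule Xf_cases[OF assms])
  assume "E 0 = 0" "I 0 = 0"
  then have "\<forall>t\<ge>0. E t + I t \<le> 0 * exp (- 1 * t)"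
    using disease_free_invariant by simp
  then show ?thesis
    using zero_less_one order_refl by blast
qed (rule E_I_exponential_decay)

end

theorem lemma2:
  fixes eta bmin bnom gnom gmax Imax :: real
  assumes "eta > 0" and "0 < bmin" and "bmin \<le> bnom"
    and "0 < gnom" and "gnom \<le> gmax" and "0 < Imax" and "Imax < 1"
  shows "Xf eta bnom gnom Imax \<subseteq> MRPI eta bmin bnom gnom gmax Imax \<and>
    (\<forall>x0 \<in> Xf eta bnom gnom Imax. \<forall>u. admissible bmin bnom gnom gmax u \<longrightarrow>
       (\<forall>x. is_sol eta u x0 x \<longrightarrow>
          (\<exists>c\<ge>0. \<exists>lam>0. \<forall>t\<ge>0. fst (snd (x t)) + snd (snd (x t)) \<le> c * exp (- lam * t))))"
proof -
  have trajectory: "(\<forall>t\<ge>0. x t \<in> G_Pi Imax) \<and>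
      (\<exists>c\<ge>0. \<exists>lam>0. \<forall>t\<ge>0. fst (snd (x t)) + snd (snd (x t)) \<le> c * exp (- lam * t))"
    if x0: "x0 \<in> Xf eta bnom gnom Imax" and "admissible bmin bnom gnom gmax u" "is_sol eta u x0 x"
    for x0 u x
  proof -
    interpret seir_trajectory_in_Pi eta bmin bnom gnom gmax u x0 x
      using assms that subsetD[OF Xf_subset_Pi_set x0] by unfold_locales auto
    show ?thesis
      using Xf_trajectory_in_G_Pi[OF x0] Xf_trajectory_decays[OF x0] assms(6)
      by (simp add: E_def I_def)
  qed
  have "Xf eta bnom gnom Imax \<subseteq> G_Pi Imax"
    using assms(6) by (intro Xf_subset_G_Pi) simp
  then show ?thesis
    using trajectory unfolding MRPI_def by blast
qed

end
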